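(* Let $X\subseteq\mathbb{R}^n$ be nonempty, closed and convex, and $F:\mathbb{R}^n\to\mathbb{R}^n$. Suppose (A1) $F$ is $L$-Lipschitz continuous and monotone on $\mathbb{R}^n$; (A2) the solution set $X^*$ of VI$(X,F)$ is nonempty and compact and there is $C>0$ with $\|F(x^* )\|\le C$ for all $x^*\in X^*$; (A3) there is $\alpha>0$ such that $(x-x^* )^TF(x^* )\ge\alpha\,\mathrm{dist}(x,X^* )$ for all $x\in X$ and $x^*\in X^*$. Then for any $x^*\in X^*$, $$F(x)^T(x-x^* )\ge\alpha\,\mathrm{dist}(\Pi_X(x),X^* )-C\,\mathrm{dist}(x,X)\quad\text{for all }x\in\mathbb{R}^n.$$
   Context: VI$(X,F)$: find $x^*\in X$ with $F(x^* )^T(x-x^* )\ge0$ for all $x\in X$; $X^*$ its solution set. $\Pi_X$ is Euclidean projection onto $X$ and $\mathrm{dist}(x,S)=\inf_{y\in S}\|x-y\|$. *)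

theory Defs
  imports "HOL-Analysis.Analysis"
begin

definition VI_sol :: "('a::real_inner) set \<Rightarrow> ('a \<Rightarrow> 'a) \<Rightarrow> 'a set" where
  "VI_sol X F = {xs \<in> X. \<forall>x\<in>X. F xs \<bullet> (x - xs) \<ge> 0}"

definition monotone_op :: "(('a::real_inner) \<Rightarrow> 'a) \<Rightarrow> bool" where
  "monotone_op F \<longleftrightarrow> (\<forall>x y. (F x - F y) \<bullet> (x - y) \<ge> 0)"

end

theory Submission
  imports Defs
begin

text \<open>Write \<open>p = \<Pi>\<^sub>X(x)\<close>. For a solution \<open>x\<^sup>*\<close>,
  \<open>F(x)\<^sup>T(x - x\<^sup>*) = (F x - F x\<^sup>*)\<^sup>T(x - x\<^sup>*) + F(x\<^sup>*)\<^sup>T(p - x\<^sup>*) + F(x\<^sup>*)\<^sup>T(x - p)\<close>.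
  The first term is nonnegative by monotonicity, the second is at least
  \<open>\<alpha> dist(p, X\<^sup>*)\<close> by the sharpness condition since \<open>p \<in> X\<close>, and the third is at least
  \<open>-C \<parallel>x - p\<parallel> = -C dist(x, X)\<close> by Cauchy-Schwarz.\<close>

lemma infdist_eq_dist_closest_point:
  fixes S :: "'a::euclidean_space set"
  assumes "closed S" "S \<noteq> {}"
  shows "infdist x S = dist x (closest_point S x)"
  using setdist_closest_point[OF assms] by (simp add: infdist_eq_setdist)

lemma monotone_op_inner_lower_bound:
  assumes "monotone_op F" "F xs \<bullet> (p - xs) \<ge> a" "norm (F xs) \<le> C"
  shows "F x \<bullet> (x - xs) \<ge> a - C * norm (x - p)"
proof -
  have mono: "(F x - F xs) \<bullet> (x - xs) \<ge> 0"
    using assms(1) unfolding monotone_op_def by blast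
  have "\<bar>F xs \<bullet> (x - p)\<bar> \<le> norm (F xs) * norm (x - p)"
    by (rule Cauchy_Schwarz_ineq2)
  also have "\<dots> \<le> C * norm (x - p)"
    using assms(3) by (simp add: mult_right_mono)
  finally have bound: "F xs \<bullet> (x - p) \<ge> - C * norm (x - p)"
    by linarith
  have "F x \<bullet> (x - xs) = (F x - F xs) \<bullet> (x - xs) + F xs \<bullet> (p - xs) + F xs \<bullet> (x - p)"
    by (simp add: inner_diff_left inner_diff_right)
  then show ?thesis
    using mono assms(2) bound by linarith
qed

theorem lemma7:
  fixes X :: "(real^'n) set" and F :: "real^'n \<Rightarrow> real^'n"
    and L C \<alpha> :: real
  assumes "X \<noteq> {}" and "closed X" and "convex X"
    and "L-lipschitz_on UNIV F" and "monotone_op F"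
    and "VI_sol X F \<noteq> {}" and "compact (VI_sol X F)"
    and "C > 0" and "\<forall>xs\<in>VI_sol X F. norm (F xs) \<le> C"
    and "\<alpha> > 0"
    and "\<forall>x\<in>X. \<forall>xs\<in>VI_sol X F. (x - xs) \<bullet> F xs \<ge> \<alpha> * infdist x (VI_sol X F)"
    and "xs \<in> VI_sol X F"
  shows "\<forall>x. F x \<bullet> (x - xs) \<ge> \<alpha> * infdist (closest_point X x) (VI_sol X F) - C * infdist x X"
proof
  fix x
  define p where "p = closest_point X x"
  have "p \<in> X"
    unfolding p_def using closest_point_in_set[OF assms(2,1)] .
  then have sharp: "F xs \<bullet> (p - xs) \<ge> \<alpha> * infdist p (VI_sol X F)"
    using assms(11,12) by (simp add: inner_commute)
  have "infdist x X = norm (x - p)"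
    unfolding p_def by (simp add: infdist_eq_dist_closest_point[OF assms(2,1)] dist_norm)
  with monotone_op_inner_lower_bound[OF assms(5) sharp] assms(9,12)
  show "F x \<bullet> (x - xs) \<ge> \<alpha> * infdist (closest_point X x) (VI_sol X F) - C * infdist x X"
    unfolding p_def by simp
qed

end
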